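(* Assume $X$ is bounded and $F$ is monotone: $\langle F(x_1)-F(x_2),x_1-x_2\rangle\ge0$ for all $x_1,x_2\in X$. Let $\{x_t\}$ be generated by the SBOE method with $p_i=\frac1b$ for all $i$, and let $\{\theta_t\}$ be nonnegative numbers such that for all $t=1,\dots,k$, $$\theta_{t+1}\gamma_{t+1}\lambda_{t+1}=\theta_t\gamma_tb,\quad\theta_{t-1}\gamma_{t-1}b\ge\theta_t\gamma_t(b-1),\quad\theta_{t-1}\ge16\bar L^2\gamma_t^2\lambda_t^2\theta_t,\quad\theta_t\le\theta_{t-1},$$ and $4L^2\gamma_k^2\le1$. Let $S=\sum_{t=1}^{k-1}[\theta_t\gamma_tb-\theta_{t+1}\gamma_{t+1}(b-1)]+\theta_k\gamma_kb$ (assumed positive) and $$\bar x_{k+1}=\frac{\sum_{t=1}^{k-1}[\theta_t\gamma_tb-\theta_{t+1}\gamma_{t+1}(b-1)]x_{t+1}+\theta_k\gamma_kbx_{k+1}}{S}.$$ Then $$\mathbb{E}[\mathrm{gap}(\bar x_{k+1})]\le\frac{\theta_1}{S}\max_{x\in X}\big[5(b+1)V(x_1,x)+\gamma_1(b-1)\langle F(x_1),x_1-x\rangle\big].$$ In particular, if $\gamma_t=\frac1{4\bar Lb}$, $\lambda_t=b$ and $\theta_t=1$ for all $t$, then $$\mathbb{E}[\mathrm{gap}(\bar x_{k+1})]\le\frac{4\bar Lb}{k-1+b}\max_{x\in X}\Big[5(b+1)V(x_1,x)+\frac{b-1}{4\bar Lb}\langle F(x_1),x_1-x\rangle\Big]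.$$
   Context: Let $X=X_1\times\cdots\times X_b\subseteq\mathbb{R}^n$, where each $X_i\subseteq\mathbb{R}^{n_i}$ is nonempty closed convex and $n_1+\dots+n_b=n$; write $x=(x^{(1)},\dots,x^{(b)})$. Each $\mathbb{R}^{n_i}$ carries the Euclidean norm $\|\cdot\|_i$, and $\|x\|^2=\sum_i\|x^{(i)}\|_i^2$ is the Euclidean norm on $\mathbb{R}^n$. For $F:X\to\mathbb{R}^n$ let $F_i(x)$ be its $i$-th block; assume $\|F(x_1)-F(x_2)\|\le L\|x_1-x_2\|$ and $\|F_i(x_1)-F_i(x_2)\|_i\le\bar L\|x_1-x_2\|$ for all $i$ and $x_1,x_2\in X$. Take $\omega_i(u)=\frac12\|u\|_i^2$, so $V_i(u,v)=\frac12\|u-v\|_i^2$ and $V(x,y)=\sum_iV_i(x^{(i)},y^{(i)})=\frac12\|x-y\|^2$. SBOE method: given $x_0=x_1\in X$, nonnegative $\{\gamma_t\},\{\lambda_t\}$ and probabilities $p_1,\dots,p_b$; for $t=1,\dots,k$ draw $i_t$ with $\mathbb{P}(i_t=i)=p_i$ independently of the past, set $x_{t+1}^{(i_t)}=\operatorname{argmin}_{u\in X_{i_t}}\gamma_t\langle F_{i_t}(x_t)+\lambda_t(F_{i_t}(x_t)-F_{i_t}(x_{t-1})),u\rangle+V_{i_t}(x_t^{(i_t)},u)$ and $x_{t+1}^{(i)}=x_t^{(i)}$ for $i\ne i_t$. The weak gap is $\mathrm{gap}(\bar x)=\max_{x\in X}\langle F(x),\bar x-x\rangle$; expectation is over $i_1,\dots,i_k$.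 *)

theory Defs
  imports "HOL-Analysis.Analysis"
begin

text \<open>R^n is modelled as real^'n; a block structure is a map blk from coordinates to
  block indices {0..<b}.\<close>

definition blk_part :: "('n::finite \<Rightarrow> nat) \<Rightarrow> nat \<Rightarrow> real^'n \<Rightarrow> real^'n" where
  "blk_part blk i x = (\<chi> j. if blk j = i then x $ j else 0)"

text \<open>Subspace of R^n corresponding to R^{n_i}.\<close>
definition blk_space :: "('n::finite \<Rightarrow> nat) \<Rightarrow> nat \<Rightarrow> (real^'n) set" where
  "blk_space blk i = {y. \<forall>j. blk j \<noteq> i \<longrightarrow> y $ j = 0}"

definition prod_set :: "('n::finite \<Rightarrow> nat) \<Rightarrow> nat \<Rightarrow> (nat \<Rightarrow> (real^'n) set) \<Rightarrow> (real^'n) set" where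
  "prod_set blk b Xi = {x. \<forall>i<b. blk_part blk i x \<in> Xi i}"

text \<open>Bregman distance for omega = 1/2 norm^2.\<close>
definition Vd :: "real^'n::finite \<Rightarrow> real^'n \<Rightarrow> real" where
  "Vd x y = (1/2) * (norm (x - y))\<^sup>2"

definition gap :: "(real^'n::finite) set \<Rightarrow> (real^'n \<Rightarrow> real^'n) \<Rightarrow> real^'n \<Rightarrow> real" where
  "gap X F y = (SUP x\<in>X. inner (F x) (y - x))"

definition sboe_step ::
  "('n::finite \<Rightarrow> nat) \<Rightarrow> (nat \<Rightarrow> (real^'n) set) \<Rightarrow> (real^'n \<Rightarrow> real^'n)
    \<Rightarrow> real \<Rightarrow> real \<Rightarrow> nat \<Rightarrow> real^'n \<Rightarrow> real^'n \<Rightarrow> real^'n \<Rightarrow> bool" where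
  "sboe_step blk Xi F g lam i xp x x' \<longleftrightarrow>
     (\<forall>i'. i' \<noteq> i \<longrightarrow> blk_part blk i' x' = blk_part blk i' x) \<and>
     (let d = blk_part blk i (F x + lam *\<^sub>R (F x - F xp));
          phi = (\<lambda>u. g * inner d u + Vd (blk_part blk i x) u)
      in blk_part blk i x' \<in> Xi i \<and> (\<forall>v\<in>Xi i. phi (blk_part blk i x') \<le> phi v))"

text \<open>The index sequences (i_1,...,i_k) with i_t in {0..<b}; uniform distribution p_i = 1/b.\<close>
definition idx_seqs :: "nat \<Rightarrow> nat \<Rightarrow> (nat \<Rightarrow> nat) set" where
  "idx_seqs b k = PiE {1..k} (\<lambda>_. {..<b})"

definition expect_unif :: "nat \<Rightarrow> nat \<Rightarrow> ((nat \<Rightarrow> nat) \<Rightarrow> real) \<Rightarrow> real" where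
  "expect_unif b k f = (\<Sum>\<omega>\<in>idx_seqs b k. f \<omega>) / (real b ^ k)"

definition S_w :: "nat \<Rightarrow> nat \<Rightarrow> (nat \<Rightarrow> real) \<Rightarrow> (nat \<Rightarrow> real) \<Rightarrow> real" where
  "S_w b k th gam = (\<Sum>t=1..k-1. th t * gam t * real b - th (t + 1) * gam (t + 1) * (real b - 1))
                    + th k * gam k * real b"

definition xbar_w :: "nat \<Rightarrow> nat \<Rightarrow> (nat \<Rightarrow> real) \<Rightarrow> (nat \<Rightarrow> real) \<Rightarrow> (nat \<Rightarrow> real^'n::finite) \<Rightarrow> real^'n" where
  "xbar_w b k th gam xs = (1 / S_w b k th gam) *\<^sub>R
      ((\<Sum>t=1..k-1. (th t * gam t * real b - th (t + 1) * gam (t + 1) * (real b - 1)) *\<^sub>R xs (t + 1))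
       + (th k * gam k * real b) *\<^sub>R xs (k + 1))"

end

theory Submission
  imports Defs
begin

text \<open>Fix a sample path and a reference point u. Let h(t) be the full prox point, the prox step
  from x(t) applied to all blocks at once: x(t+1) copies its block i(t), and h(t) depends only on
  i(1), ..., i(t-1). The three-point inequality for h(t), rescaled by b, bounds the contribution of
  step t to the weighted sum of the \<open>\<langle>F u, x(t+1) - u\<rangle>\<close> up to the noise
  \<open>\<xi>(t) = b (x(t+1) - x(t)) - (h(t) - x(t))\<close>, which has mean zero over i(t). Its pairing with
  x(t) - u is split along a ghost sequence \<open>v(t+1) = v(t) - (\<theta>(t) / c) \<xi>(t)\<close> into a telescoping
  term \<open>c (V(v(t), u) - V(v(t+1), u))\<close> and terms not involving u; the extrapolation error is
  absorbed by Young's inequality under the step-size conditions. Summing over t and using the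
  monotonicity of F, \<open>S \<langle>F u, x\<^sub>a\<^sub>v\<^sub>g - u\<rangle>\<close> is bounded by \<open>\<theta>(1)\<close> times the initial term plus a
  residual \<open>\<Sum>\<^sub>t (b \<phi>\<^sub>t(i(t)) - \<Sum>\<^sub>i \<phi>\<^sub>t(i))\<close> with \<open>\<phi>\<^sub>t\<close> depending only on the earlier indices.
  The residual does not depend on u, so the bound survives the supremum over u, and averaging
  over all index sequences removes it.\<close>

section \<open>Block projections\<close>

lemma blk_part_diff: "blk_part blk i (a - c) = blk_part blk i a - blk_part blk i c"
  by (simp add: blk_part_def vec_eq_iff)

lemma blk_part_idem: "blk_part blk i (blk_part blk i a) = blk_part blk i a"
  by (simp add: blk_part_def vec_eq_iff)

lemma blk_part_blk_part_other: "i \<noteq> j \<Longrightarrow> blk_part blk i (blk_part blk j a) = 0"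
  by (simp add: blk_part_def vec_eq_iff)

lemma inner_blk_part_left: "inner (blk_part blk i a) c = inner (blk_part blk i a) (blk_part blk i c)"
  by (auto simp add: blk_part_def inner_vec_def intro!: sum.cong)

lemma inner_blk_part_right: "inner a (blk_part blk i c) = inner (blk_part blk i a) (blk_part blk i c)"
  by (auto simp add: blk_part_def inner_vec_def intro!: sum.cong)

lemma norm_blk_part_sq: "(norm (blk_part blk i a))\<^sup>2 = inner (blk_part blk i a) a"
  by (metis inner_blk_part_left power2_norm_eq_inner)

lemma sum_blk_part:
  assumes "\<forall>j. blk j < b"
  shows "(\<Sum>i<b. blk_part blk i w) = w"
proof -
  have "(\<Sum>i<b. blk_part blk i w $ j) = w $ j" for j
  proof -
    have "(\<Sum>i<b. blk_part blk i w $ j) = (\<Sum>i<b. if i = blk j then w $ j else 0)"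
      by (rule sum.cong) (auto simp: blk_part_def)
    then show ?thesis using assms by simp
  qed
  then show ?thesis by (simp add: vec_eq_iff)
qed

lemma sum_inner_blk_part_left: "\<forall>j. blk j < b \<Longrightarrow> (\<Sum>i<b. inner (blk_part blk i a) c) = inner a c"
  by (simp add: inner_sum_left[symmetric] sum_blk_part)

lemma sum_inner_blk_part_right: "\<forall>j. blk j < b \<Longrightarrow> (\<Sum>i<b. inner c (blk_part blk i a)) = inner c a"
  by (simp add: inner_sum_right[symmetric] sum_blk_part)

lemma sum_norm_blk_part_sq:
  "\<forall>j. blk j < b \<Longrightarrow> (\<Sum>i<b. (norm (blk_part blk i a))\<^sup>2) = (norm a)\<^sup>2"
proof -
  assume blk: "\<forall>j. blk j < b"
  have "(\<Sum>i<b. (norm (blk_part blk i a))\<^sup>2) = (\<Sum>i<b. inner (blk_part blk i a) a)"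
    by (simp only: norm_blk_part_sq)
  also have "\<dots> = (norm a)\<^sup>2" by (simp add: sum_inner_blk_part_left[OF blk] power2_norm_eq_inner)
  finally show ?thesis .
qed

lemma blk_part_sum_blk_parts:
  assumes "i < b"
  shows "blk_part blk i (\<Sum>j<b. blk_part blk j (y j)) = blk_part blk i (y i)"
proof -
  have "blk_part blk i (\<Sum>j<b. blk_part blk j (y j)) = (\<Sum>j<b. blk_part blk i (blk_part blk j (y j)))"
    by (simp add: blk_part_def vec_eq_iff)
  also have "\<dots> = (\<Sum>j\<in>{i}. blk_part blk i (blk_part blk j (y j)))"
    using assms by (intro sum.mono_neutral_right) (auto simp: blk_part_blk_part_other)
  finally show ?thesis by (simp add: blk_part_idem)
qed

lemma Vd_sum_blk_part:
  "\<forall>j. blk j < b \<Longrightarrow> (\<Sum>i<b. Vd (blk_part blk i a) (blk_part blk i c)) = Vd a c"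
  by (simp add: Vd_def blk_part_diff[symmetric] sum_divide_distrib[symmetric] sum_norm_blk_part_sq)

lemma norm_diff_sq: "(norm (a - c))\<^sup>2 = (norm a)\<^sup>2 - 2 * inner a c + (norm c)\<^sup>2"
  for a c :: "'a::real_inner"
  by (simp add: power2_norm_eq_inner inner_diff_left inner_diff_right inner_commute)

lemma norm_scaled_blk_part_minus_sq:
  fixes d :: "real^'n::finite"
  shows "(norm (b *\<^sub>R blk_part blk i d - d))\<^sup>2
     = (b - 2) * (b * (norm (blk_part blk i d))\<^sup>2 - (norm d)\<^sup>2) + (b - 1) * (norm d)\<^sup>2"
proof -
  have "(norm (b *\<^sub>R blk_part blk i d - d))\<^sup>2
      = b\<^sup>2 * (norm (blk_part blk i d))\<^sup>2 - 2 * b * inner (blk_part blk i d) d + (norm d)\<^sup>2"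
    by (simp add: norm_diff_sq power_mult_distrib)
  also have "inner (blk_part blk i d) d = (norm (blk_part blk i d))\<^sup>2" by (simp add: norm_blk_part_sq)
  finally show ?thesis by (simp add: algebra_simps power2_eq_square)
qed

section \<open>The prox step\<close>

lemma Vd_commute: "Vd a c = Vd c a"
  by (simp add: Vd_def norm_minus_commute)

lemma Vd_add: "Vd (a + p) u = Vd a u + inner p (a - u) + (norm p)\<^sup>2 / 2"
proof -
  have "(norm ((a - u) + p))\<^sup>2 = (norm (a - u))\<^sup>2 + 2 * inner p (a - u) + (norm p)\<^sup>2"
    by (simp add: power2_norm_eq_inner inner_add_left inner_add_right inner_commute)
  then show ?thesis by (simp add: Vd_def diff_add_eq field_simps)
qed

lemma Vd_three_point: "Vd a v - Vd y v - Vd a y = inner (a - y) (y - v)"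
proof -
  have "Vd a v = Vd y v + inner (a - y) (y - v) + Vd a y"
    using Vd_add[of y "a - y" v] by (simp add: Vd_def norm_minus_commute)
  then show ?thesis by simp
qed

text \<open>The prox objective is, up to a constant, half the squared distance to \<open>a - g d\<close>, so its
  minimiser over \<open>C\<close> is the projection of that point and satisfies the obtuse-angle criterion.\<close>
lemma prox_three_point:
  fixes a d y v :: "real^'n::finite"
  assumes C: "convex C" and y: "y \<in> C" and v: "v \<in> C"
    and opt: "\<forall>w\<in>C. g * inner d y + Vd a y \<le> g * inner d w + Vd a w"
  shows "g * inner d (y - v) \<le> Vd a v - Vd y v - Vd a y"
proof -
  define c where "c = a - g *\<^sub>R d"
  have objective: "g * inner d w + Vd a w = Vd c w + g * inner d a - g\<^sup>2 * (norm d)\<^sup>2 / 2" for w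
  proof -
    have "Vd a w = Vd c w + inner (g *\<^sub>R d) (c - w) + (norm (g *\<^sub>R d))\<^sup>2 / 2"
      using Vd_add[of c "g *\<^sub>R d" w] by (simp add: c_def)
    then show ?thesis
      by (simp add: c_def inner_diff_right power_mult_distrib dot_square_norm algebra_simps)
  qed
  have closest: "dist y c \<le> dist w c" if "w \<in> C" for w
  proof -
    have "Vd c y \<le> Vd c w" using opt that by (simp add: objective)
    then have "(norm (y - c))\<^sup>2 \<le> (norm (w - c))\<^sup>2" by (simp add: Vd_def norm_minus_commute)
    then show ?thesis by (simp add: dist_norm power2_le_iff_abs_le)
  qed
  have "inner (c - y) (v - y) \<le> 0"
  proof (rule ccontr)
    assume "\<not> ?thesis"
    then obtain s where s: "0 < s" "s \<le> 1" "dist (y + s *\<^sub>R (v - y)) c < dist y c"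
      using closer_point_lemma[of c y v] by auto
    have "y + s *\<^sub>R (v - y) = (1 - s) *\<^sub>R y + s *\<^sub>R v" by (simp add: algebra_simps)
    then have "y + s *\<^sub>R (v - y) \<in> C" using C y v s by (simp add: convex_alt)
    then show False using closest s(3) by fastforce
  qed
  then have "g * inner d (y - v) \<le> inner (a - y) (y - v)"
    by (simp add: c_def inner_diff_left inner_diff_right inner_commute algebra_simps)
  then show ?thesis by (simp only: Vd_three_point)
qed

lemma resampled_prox_inequality:
  fixes g x d D u :: "real^'n::finite"
  assumes th: "0 \<le> th" and prox: "gm * inner g (x + d - u) \<le> Vd x u - Vd (x + d) u - (norm d)\<^sup>2 / 2"
  shows "th * gm * (b * inner g (x + D - u) - (b - 1) * inner g (x - u))
     \<le> th * b * (Vd x u - Vd (x + D) u) + th * inner (b *\<^sub>R D - d) (x - u)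
       + th * gm * (b * inner g D - inner g d) + th / 2 * (b * (norm D)\<^sup>2 - (norm d)\<^sup>2)
       - th / 2 * (norm d)\<^sup>2"
proof -
  have "x + d - u = (x - u) + d" by simp
  then have "gm * inner g (x - u) \<le> - inner d (x - u) - (norm d)\<^sup>2 - gm * inner g d"
    using prox by (simp only: Vd_add inner_add_right) (simp add: algebra_simps)
  then have "th * (gm * inner g (x - u)) \<le> th * (- inner d (x - u) - (norm d)\<^sup>2 - gm * inner g d)"
    using th by (rule mult_left_mono)
  moreover have VD: "Vd (x + D) u = Vd x u + inner D (x - u) + (norm D)\<^sup>2 / 2" by (rule Vd_add)
  have "th * b * (Vd x u - Vd (x + D) u) + th * inner (b *\<^sub>R D - d) (x - u)
       + th * gm * (b * inner g D - inner g d) + th / 2 * (b * (norm D)\<^sup>2 - (norm d)\<^sup>2)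
       - th / 2 * (norm d)\<^sup>2 - th * gm * (b * inner g (x + D - u) - (b - 1) * inner g (x - u))
     = th * (- inner d (x - u) - (norm d)\<^sup>2 - gm * inner g d) - th * (gm * inner g (x - u))"
    unfolding VD by (simp add: inner_simps algebra_simps)
  ultimately show ?thesis by linarith
qed

lemma inner_as_Vd_decrease:
  fixes xi v u :: "real^'n::finite"
  assumes "0 < c"
  shows "th * inner xi (v - u) = c * (Vd v u - Vd (v - (th / c) *\<^sub>R xi) u) + th\<^sup>2 / (2 * c) * (norm xi)\<^sup>2"
proof -
  have E: "Vd (v - (th / c) *\<^sub>R xi) u = Vd v u - (th / c) * inner xi (v - u) + (th / c)\<^sup>2 * (norm xi)\<^sup>2 / 2"
    using Vd_add[of v "- ((th / c) *\<^sub>R xi)" u]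
    by (simp only: norm_minus_cancel norm_scaleR power_mult_distrib power2_abs) simp
  show ?thesis unfolding E using assms by (simp add: power2_eq_square field_simps)
qed

lemma sboe_step_eq_update:
  assumes "sboe_step blk Xi F g lam i xp x x'"
  shows "x' = x + blk_part blk i (x' - x)"
proof -
  have other: "blk_part blk i' x' = blk_part blk i' x" if "i' \<noteq> i" for i'
    using assms that unfolding sboe_step_def by blast
  have "x' $ j = x $ j + blk_part blk i (x' - x) $ j" for j
  proof (cases "blk j = i")
    case False
    then have "blk_part blk (blk j) x' $ j = blk_part blk (blk j) x $ j" using other by metis
    then show ?thesis using False by (simp add: blk_part_def)
  qed (simp add: blk_part_def)
  then show ?thesis by (simp add: vec_eq_iff)
qed

lemma sboe_step_minimizer:
  assumes "sboe_step blk Xi F g lam i xp x x'"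
  shows "blk_part blk i x' \<in> Xi i"
    and "\<forall>v\<in>Xi i. g * inner (blk_part blk i (F x + lam *\<^sub>R (F x - F xp))) (blk_part blk i x')
          + Vd (blk_part blk i x) (blk_part blk i x')
       \<le> g * inner (blk_part blk i (F x + lam *\<^sub>R (F x - F xp))) v + Vd (blk_part blk i x) v"
  using assms unfolding sboe_step_def Let_def by blast+

lemma sboe_step_unique:
  assumes C: "convex (Xi i)"
    and s1: "sboe_step blk Xi F g lam i xp x x1" and s2: "sboe_step blk Xi F g lam i xp x x2"
  shows "x1 = x2"
proof -
  define d where "d = blk_part blk i (F x + lam *\<^sub>R (F x - F xp))"
  define y1 where "y1 = blk_part blk i x1"
  define y2 where "y2 = blk_part blk i x2"
  note m1 = sboe_step_minimizer[OF s1, folded d_def y1_def]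
  note m2 = sboe_step_minimizer[OF s2, folded d_def y2_def]
  have "g * inner d (y1 - y2) \<le> Vd (blk_part blk i x) y2 - Vd y1 y2 - Vd (blk_part blk i x) y1"
    by (rule prox_three_point[OF C m1(1) m2(1) m1(2)])
  moreover have "g * inner d (y2 - y1) \<le> Vd (blk_part blk i x) y1 - Vd y2 y1 - Vd (blk_part blk i x) y2"
    by (rule prox_three_point[OF C m2(1) m1(1) m2(2)])
  moreover have "inner d (y2 - y1) = - inner d (y1 - y2)" by (simp add: inner_diff_right)
  ultimately have "Vd y1 y2 \<le> 0" using Vd_commute[of y1 y2] by simp
  then have "y1 = y2" by (simp add: Vd_def)
  then show ?thesis
    using sboe_step_eq_update[OF s1] sboe_step_eq_update[OF s2]
    by (metis y1_def y2_def blk_part_diff)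
qed

lemma blockwise_prox_three_point:
  fixes g x h u :: "real^'n::finite"
  assumes blk: "\<forall>j. blk j < b" and C: "\<forall>i<b. convex (Xi i)"
    and opt: "\<forall>i<b. blk_part blk i h \<in> Xi i \<and> (\<forall>v\<in>Xi i.
        gm * inner (blk_part blk i g) (blk_part blk i h) + Vd (blk_part blk i x) (blk_part blk i h)
       \<le> gm * inner (blk_part blk i g) v + Vd (blk_part blk i x) v)"
    and u: "u \<in> prod_set blk b Xi"
  shows "gm * inner g (h - u) \<le> Vd x u - Vd h u - Vd x h"
proof -
  let ?P = "blk_part blk"
  have "gm * inner g (h - u) = (\<Sum>i<b. gm * inner (?P i g) (?P i h - ?P i u))"
    by (simp add: sum_distrib_left[symmetric] blk_part_diff[symmetric] inner_blk_part_left[symmetric]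
        sum_inner_blk_part_left[OF blk])
  also have "\<dots> \<le> (\<Sum>i<b. Vd (?P i x) (?P i u) - Vd (?P i h) (?P i u) - Vd (?P i x) (?P i h))"
  proof (rule sum_mono)
    fix i assume "i \<in> {..<b}"
    then have i: "i < b" by simp
    have "convex (Xi i)" "?P i h \<in> Xi i" "?P i u \<in> Xi i"
      using C opt u i by (auto simp: prod_set_def)
    then show "gm * inner (?P i g) (?P i h - ?P i u)
        \<le> Vd (?P i x) (?P i u) - Vd (?P i h) (?P i u) - Vd (?P i x) (?P i h)"
      using opt i by (intro prox_three_point) auto
  qed
  also have "\<dots> = Vd x u - Vd h u - Vd x h"
    by (simp add: sum_subtractf Vd_sum_blk_part[OF blk])
  finally show ?thesis .
qed

section \<open>Averaging over index sequences\<close>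

lemma idx_seqs_fun_upd: "w \<in> idx_seqs b k \<Longrightarrow> t \<in> {1..k} \<Longrightarrow> j < b \<Longrightarrow> w(t := j) \<in> idx_seqs b k"
  unfolding idx_seqs_def using PiE_fun_upd[of j "\<lambda>_. {..<b}" t w "{1..k}"]
  by (simp add: insert_absorb)

lemma idx_seqs_less: "w \<in> idx_seqs b k \<Longrightarrow> t \<in> {1..k} \<Longrightarrow> w t < b"
  unfolding idx_seqs_def by (auto simp: PiE_def Pi_def)

lemma card_idx_seqs: "card (idx_seqs b k) = b ^ k"
  unfolding idx_seqs_def by (simp add: card_PiE)

lemma sum_idx_seqs_split:
  fixes G :: "(nat \<Rightarrow> nat) \<Rightarrow> real"
  assumes t: "t \<in> {1..k}"
  shows "(\<Sum>w\<in>idx_seqs b k. G w) = (\<Sum>i<b. \<Sum>g\<in>PiE ({1..k} - {t}) (\<lambda>_. {..<b}). G (g(t := i)))"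
proof -
  let ?S = "{1..k} - {t}" and ?T = "\<lambda>_::nat. {..<b}"
  have eq: "idx_seqs b k = PiE (insert t ?S) ?T" using t by (simp add: idx_seqs_def insert_absorb)
  have inj: "inj_on (\<lambda>(y, g). g(t := y)) (?T t \<times> PiE ?S ?T)" by (rule inj_combinator) simp
  have "(\<Sum>w\<in>idx_seqs b k. G w) = (\<Sum>w\<in>(\<lambda>(y, g). g(t := y)) ` (?T t \<times> PiE ?S ?T). G w)"
    unfolding eq by (simp only: PiE_insert_eq)
  also have "\<dots> = (\<Sum>p\<in>?T t \<times> PiE ?S ?T. G ((\<lambda>(y, g). g(t := y)) p))"
    by (rule sum.reindex[OF inj, unfolded comp_def])
  also have "\<dots> = (\<Sum>i<b. \<Sum>g\<in>PiE ?S ?T. G (g(t := i)))"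
    by (simp add: sum.cartesian_product split_beta)
  finally show ?thesis .
qed

lemma sum_idx_seqs_resample:
  fixes G :: "(nat \<Rightarrow> nat) \<Rightarrow> real"
  assumes t: "t \<in> {1..k}"
  shows "(\<Sum>w\<in>idx_seqs b k. \<Sum>j<b. G (w(t := j))) = real b * (\<Sum>w\<in>idx_seqs b k. G w)"
proof -
  let ?P = "PiE ({1..k} - {t}) (\<lambda>_::nat. {..<b})"
  have "(\<Sum>w\<in>idx_seqs b k. \<Sum>j<b. G (w(t := j))) = (\<Sum>i<b. \<Sum>g\<in>?P. \<Sum>j<b. G (g(t := j)))"
    using sum_idx_seqs_split[OF t, of "\<lambda>w. \<Sum>j<b. G (w(t := j))"] by simp
  also have "\<dots> = real b * (\<Sum>g\<in>?P. \<Sum>j<b. G (g(t := j)))" by simp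
  also have "(\<Sum>g\<in>?P. \<Sum>j<b. G (g(t := j))) = (\<Sum>j<b. \<Sum>g\<in>?P. G (g(t := j)))"
    by (rule sum.swap)
  also have "\<dots> = (\<Sum>w\<in>idx_seqs b k. G w)" using sum_idx_seqs_split[OF t, of G] by simp
  finally show ?thesis .
qed

lemma sum_idx_seqs_zero_mean:
  fixes \<phi> :: "(nat \<Rightarrow> nat) \<Rightarrow> nat \<Rightarrow> real"
  assumes t: "t \<in> {1..k}"
    and indep: "\<And>w j i. w \<in> idx_seqs b k \<Longrightarrow> j < b \<Longrightarrow> \<phi> (w(t := j)) i = \<phi> w i"
  shows "(\<Sum>w\<in>idx_seqs b k. real b * \<phi> w (w t) - (\<Sum>i<b. \<phi> w i)) = 0"
proof -
  have "real b * (\<Sum>w\<in>idx_seqs b k. \<phi> w (w t)) = (\<Sum>w\<in>idx_seqs b k. \<Sum>j<b. \<phi> (w(t := j)) j)"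
    using sum_idx_seqs_resample[OF t, of "\<lambda>w. \<phi> w (w t)"] by simp
  also have "\<dots> = (\<Sum>w\<in>idx_seqs b k. \<Sum>i<b. \<phi> w i)"
    using indep by (intro sum.cong) auto
  finally show ?thesis by (simp add: sum_subtractf sum_distrib_left)
qed

section \<open>Scalar inequalities and telescoping\<close>

lemma le_first_if_stepwise_decreasing:
  fixes f :: "nat \<Rightarrow> real"
  assumes dec: "\<forall>t\<in>{1..k}. f t \<le> f (t - 1)" and t: "1 \<le> t" "t \<le> k"
  shows "f t \<le> f 1"
  using t
proof (induction t rule: dec_induct)
  case (step t)
  then have "f (Suc t) \<le> f t" using dec by (metis atLeastAtMost_iff diff_Suc_1 le_SucI Suc_leI)
  then show ?case using step by simp
qed simp

lemma sum_telescope_forward: "(\<Sum>t=1..n. f t - f (t + 1)) = f 1 - f (n + 1)" for f :: "nat \<Rightarrow> real"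
  by (induction n) auto

lemma sum_telescope_backward: "(\<Sum>t=1..n. f t - f (t - 1)) = f n - f 0" for f :: "nat \<Rightarrow> real"
  by (induction n) auto

lemma sum_telescope_decreasing_weights:
  fixes th V :: "nat \<Rightarrow> real"
  assumes "1 \<le> n" and dec: "\<forall>t\<in>{1..n}. th t \<le> th (t - 1)" and V: "\<forall>t. 0 \<le> V t"
  shows "(\<Sum>t=1..n. th t * (V t - V (t + 1))) \<le> th 1 * V 1 - th n * V (n + 1)"
  using assms(1)
proof (induction n rule: dec_induct)
  case (step m)
  then have "Suc m \<in> {1..n}" by simp
  then have "th (Suc m) \<le> th m" using dec by fastforce
  then have "th (Suc m) * V (m + 1) \<le> th m * V (m + 1)" using V by (simp add: mult_right_mono)
  with step.IH show ?case by (simp add: algebra_simps)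
qed (simp add: algebra_simps)

lemma sum_shift_pairs:
  fixes a c :: "nat \<Rightarrow> real"
  assumes "1 \<le> n"
  shows "(\<Sum>t=1..n-1. a t - c (t + 1)) + a n = c 1 + (\<Sum>t=1..n. a t - c t)"
  using assms
proof (induction n rule: dec_induct)
  case (step n)
  have "(\<Sum>t=1..Suc n - 1. a t - c (t + 1)) = (\<Sum>t=1..n-1. a t - c (t + 1)) + (a n - c (n + 1))"
    using step.hyps by (cases n) auto
  with step.IH show ?case by simp
qed simp

lemma extrapolation_error_young:
  fixes th th' gm lm b Lb X Y q :: real
  assumes "th \<ge> 0" "gm \<ge> 0" "lm \<ge> 0" "b \<ge> 0" "X \<ge> 0" "Y \<ge> 0"
    and q: "\<bar>q\<bar> \<le> Lb * X * Y" and c: "16 * Lb\<^sup>2 * gm\<^sup>2 * lm\<^sup>2 * th \<le> th'"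
  shows "- (th * gm * b * lm * q) \<le> (b * th * Y\<^sup>2 + b * th' * X\<^sup>2) / 8"
proof -
  define z where "z = gm * lm * \<bar>Lb\<bar> * X"
  have "\<bar>q\<bar> \<le> \<bar>Lb\<bar> * X * Y"
    using q assms by (smt (verit) abs_ge_self mult_right_mono)
  then have "th * gm * lm * \<bar>q\<bar> \<le> th * gm * lm * (\<bar>Lb\<bar> * X * Y)"
    using assms by (intro mult_left_mono) auto
  also have "\<dots> = th * Y * z" by (simp add: z_def algebra_simps)
  also have "\<dots> \<le> th * Y\<^sup>2 / 8 + 2 * th * z\<^sup>2"
  proof -
    have "0 \<le> th * (Y - 4 * z)\<^sup>2" using assms by simp
    then show ?thesis by (simp add: power2_eq_square algebra_simps)
  qed
  also have "2 * th * z\<^sup>2 = (16 * Lb\<^sup>2 * gm\<^sup>2 * lm\<^sup>2 * th) * X\<^sup>2 / 8"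
    by (simp add: z_def power_mult_distrib power2_abs)
  also have "\<dots> \<le> th' * X\<^sup>2 / 8" using c by (intro divide_right_mono mult_right_mono) auto
  finally have A: "th * gm * lm * \<bar>q\<bar> \<le> th * Y\<^sup>2 / 8 + th' * X\<^sup>2 / 8" by simp
  have "- (th * gm * b * lm * q) \<le> b * (th * gm * lm * \<bar>q\<bar>)"
    using assms mult_left_mono[of "- q" "\<bar>q\<bar>" "th * gm * b * lm"] by (simp add: algebra_simps)
  also have "\<dots> \<le> b * (th * Y\<^sup>2 / 8 + th' * X\<^sup>2 / 8)" using A assms by (intro mult_left_mono) auto
  finally show ?thesis by (simp add: algebra_simps add_divide_distrib)
qed

lemma last_step_error_young:
  fixes th gm b L D Z q :: real
  assumes "th \<ge> 0" "gm \<ge> 0" "b \<ge> 0" "D \<ge> 0" "Z \<ge> 0"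
    and q: "\<bar>q\<bar> \<le> L * D * Z" and c: "4 * L\<^sup>2 * gm\<^sup>2 \<le> 1"
  shows "th * gm * b * q \<le> th * b * (Z\<^sup>2 / 2 + D\<^sup>2 / 8)"
proof -
  have "\<bar>q\<bar> \<le> \<bar>L\<bar> * D * Z"
    using q assms by (smt (verit) abs_ge_self mult_right_mono)
  then have "gm * q \<le> gm * (\<bar>L\<bar> * D * Z)"
    using assms by (smt (verit) mult_left_mono abs_ge_self)
  also have "\<dots> \<le> Z\<^sup>2 / 2 + (gm * \<bar>L\<bar> * D)\<^sup>2 / 2"
  proof -
    have "0 \<le> (Z - gm * \<bar>L\<bar> * D)\<^sup>2" by simp
    then show ?thesis by (simp add: power2_eq_square algebra_simps)
  qed
  also have "(gm * \<bar>L\<bar> * D)\<^sup>2 = (4 * L\<^sup>2 * gm\<^sup>2) * D\<^sup>2 / 4"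
    by (simp add: power_mult_distrib power2_abs)
  also have "\<dots> \<le> D\<^sup>2 / 4"
    using mult_right_mono[OF c, of "D\<^sup>2"] by simp
  finally have "gm * q \<le> Z\<^sup>2 / 2 + D\<^sup>2 / 8" by simp
  then have "(th * b) * (gm * q) \<le> (th * b) * (Z\<^sup>2 / 2 + D\<^sup>2 / 8)"
    using assms by (intro mult_left_mono) auto
  then show ?thesis by (simp add: algebra_simps)
qed

section \<open>Analysis along one trajectory\<close>

locale sboe_trajectory_data =
  fixes blk :: "'n::finite \<Rightarrow> nat" and b k :: nat and F :: "real^'n \<Rightarrow> real^'n"
    and gam lam th :: "nat \<Rightarrow> real" and xs hh :: "nat \<Rightarrow> real^'n" and ii :: "nat \<Rightarrow> nat"
begin

definition "ext_op t = F (xs t) + lam t *\<^sub>R (F (xs t) - F (xs (t - 1)))"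
definition "full_step t = hh t - xs t"
definition "actual_step t = xs (t + 1) - xs t"
definition "noise t = real b *\<^sub>R actual_step t - full_step t"

text \<open>The factor 4 in \<open>ghost_weight\<close> keeps the variance term of the ghost step below \<open>\<theta>/8\<close>
  (\<open>noise_variance_le\<close>) and produces the constant \<open>5 = 1 + 4\<close> of the bound; the part \<open>\<theta>/4\<close> of
  \<open>residual_coeff\<close> beyond the \<open>\<theta>/2\<close> of the prox inequality yields the \<open>step_energy\<close> that pays for
  the extrapolation errors.\<close>
definition "ghost_weight = 4 * th 1 * real b"
definition "ghost t = xs 1 - (1 / ghost_weight) *\<^sub>R (\<Sum>s\<in>{1..<t}. th s *\<^sub>R noise s)"
definition "residual_coeff t = 3 * th t / 4 + (th t)\<^sup>2 * (real b - 2) / (2 * ghost_weight)"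
definition "residual_part t i =
   th t * inner (blk_part blk i (full_step t)) (xs t - ghost t)
   + th t * gam t * inner (ext_op t) (blk_part blk i (full_step t))
   + residual_coeff t * (norm (blk_part blk i (full_step t)))\<^sup>2"
definition "residual = (\<Sum>t=1..k. real b * residual_part t (ii t) - (\<Sum>i<b. residual_part t i))"
definition "step_energy t = real b * th t * (norm (actual_step t))\<^sup>2"

end

lemma residual_part_depends_on_past:
  assumes "1 \<le> t" and "\<forall>s\<le>t. xs' s = xs s" and "\<forall>s\<in>{1..t}. hh' s = hh s"
  shows "sboe_trajectory_data.residual_part blk b F gam lam th xs' hh' t i
       = sboe_trajectory_data.residual_part blk b F gam lam th xs hh t i"
proof -
  interpret new: sboe_trajectory_data blk b k F gam lam th xs' hh' ii .
  interpret old: sboe_trajectory_data blk b k F gam lam th xs hh ii .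
  have "new.noise s = old.noise s" if "s \<in> {1..<t}" for s
    using assms that by (simp add: new.noise_def old.noise_def new.actual_step_def
        old.actual_step_def new.full_step_def old.full_step_def)
  then have "new.ghost t = old.ghost t"
    using assms by (simp add: new.ghost_def old.ghost_def new.ghost_weight_def old.ghost_weight_def)
  then show ?thesis
    using assms by (simp add: new.residual_part_def old.residual_part_def new.full_step_def
        old.full_step_def new.ext_op_def old.ext_op_def new.residual_coeff_def
        old.residual_coeff_def new.ghost_weight_def old.ghost_weight_def)
qed

locale sboe_trajectory = sboe_trajectory_data blk b k F gam lam th xs hh ii
  for blk :: "'n::finite \<Rightarrow> nat" and b k F gam lam th xs hh ii +
  fixes Xi :: "nat \<Rightarrow> (real^'n) set" and L Lbar :: real
  assumes blk_range: "\<forall>j. blk j < b" and b_pos: "1 \<le> b" and k_pos: "1 \<le> k"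
    and xs_in: "\<forall>t\<le>k + 1. xs t \<in> prod_set blk b Xi"
    and xs_0: "xs 0 = xs 1"
    and xs_step: "\<forall>t\<in>{1..k}. xs (t + 1) = xs t + blk_part blk (ii t) (hh t - xs t)"
    and ii_less: "\<forall>t\<in>{1..k}. ii t < b"
    and hh_prox: "\<forall>t\<in>{1..k}. \<forall>u\<in>prod_set blk b Xi.
                    gam t * inner (ext_op t) (hh t - u) \<le> Vd (xs t) u - Vd (hh t) u - Vd (xs t) (hh t)"
    and F_lip: "\<forall>y1\<in>prod_set blk b Xi. \<forall>y2\<in>prod_set blk b Xi.
                  norm (F y1 - F y2) \<le> L * norm (y1 - y2)"
    and Fi_lip: "\<forall>i<b. \<forall>y1\<in>prod_set blk b Xi. \<forall>y2\<in>prod_set blk b Xi.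
                  norm (blk_part blk i (F y1) - blk_part blk i (F y2)) \<le> Lbar * norm (y1 - y2)"
    and F_mono: "\<forall>y1\<in>prod_set blk b Xi. \<forall>y2\<in>prod_set blk b Xi.
                  inner (F y1 - F y2) (y1 - y2) \<ge> 0"
    and gam_nonneg: "\<forall>t. gam t \<ge> 0"
    and lam_nonneg: "\<forall>t. lam t \<ge> 0"
    and th_nonneg: "\<forall>t. th t \<ge> 0"
    and th_eq: "\<forall>t\<in>{1..k}. th (t + 1) * gam (t + 1) * lam (t + 1) = th t * gam t * real b"
    and th_ge: "\<forall>t\<in>{1..k}. th (t - 1) * gam (t - 1) * real b \<ge> th t * gam t * (real b - 1)"
    and th_Lbar: "\<forall>t\<in>{1..k}. th (t - 1) \<ge> 16 * Lbar\<^sup>2 * (gam t)\<^sup>2 * (lam t)\<^sup>2 * th t"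
    and th_dec: "\<forall>t\<in>{1..k}. th t \<le> th (t - 1)"
    and L_gam_k: "4 * L\<^sup>2 * (gam k)\<^sup>2 \<le> 1"
    and th_1_pos: "th 1 > 0"
begin

lemma ghost_weight_pos: "ghost_weight > 0"
  using th_1_pos b_pos by (simp add: ghost_weight_def)

lemma actual_step_eq: "t \<in> {1..k} \<Longrightarrow> actual_step t = blk_part blk (ii t) (full_step t)"
  using xs_step by (simp add: actual_step_def full_step_def)

lemma ghost_1: "ghost 1 = xs 1"
  by (simp add: ghost_def)

lemma ghost_Suc: "1 \<le> t \<Longrightarrow> ghost (t + 1) = ghost t - (th t / ghost_weight) *\<^sub>R noise t"
proof -
  assume "1 \<le> t"
  then have "{1..<t + 1} = insert t {1..<t}" by auto
  then show ?thesis by (simp add: ghost_def algebra_simps)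
qed

lemma step_energy_0: "step_energy 0 = 0"
  using xs_0 by (simp add: step_energy_def actual_step_def)

lemma residual_part_resampled:
  assumes t: "t \<in> {1..k}"
  shows "real b * residual_part t (ii t) - (\<Sum>i<b. residual_part t i)
    = th t * inner (noise t) (xs t - ghost t)
      + th t * gam t * (real b * inner (ext_op t) (actual_step t) - inner (ext_op t) (full_step t))
      + residual_coeff t * (real b * (norm (actual_step t))\<^sup>2 - (norm (full_step t))\<^sup>2)"
proof -
  have sum: "(\<Sum>i<b. residual_part t i) = th t * inner (full_step t) (xs t - ghost t)
      + th t * gam t * inner (ext_op t) (full_step t) + residual_coeff t * (norm (full_step t))\<^sup>2"
    unfolding residual_part_def
    by (simp add: sum.distrib sum_distrib_left[symmetric] sum_inner_blk_part_left[OF blk_range]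
        sum_inner_blk_part_right[OF blk_range] sum_norm_blk_part_sq[OF blk_range])
  have chosen: "residual_part t (ii t) = th t * inner (actual_step t) (xs t - ghost t)
      + th t * gam t * inner (ext_op t) (actual_step t) + residual_coeff t * (norm (actual_step t))\<^sup>2"
    unfolding residual_part_def actual_step_eq[OF t] ..
  show ?thesis unfolding sum chosen noise_def by (simp add: inner_simps algebra_simps)
qed

lemma noise_variance_le:
  assumes t: "t \<in> {1..k}"
  shows "(th t)\<^sup>2 * (real b - 1) / (2 * ghost_weight) \<le> th t / 8"
proof -
  have "th t \<le> th 1" using le_first_if_stepwise_decreasing[OF th_dec] t by simp
  then have "(th t)\<^sup>2 * (real b - 1) \<le> th t * (th 1 * real b)"
    unfolding power2_eq_square mult.assoc
    using th_nonneg b_pos by (intro mult_left_mono mult_mono) auto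
  then have "(th t)\<^sup>2 * (real b - 1) / (2 * ghost_weight) \<le> th t * (th 1 * real b) / (2 * ghost_weight)"
    using ghost_weight_pos by (intro divide_right_mono) auto
  also have "\<dots> = th t / 8" using th_1_pos b_pos by (simp add: ghost_weight_def)
  finally show ?thesis .
qed

lemma extrapolation_error:
  assumes t: "t \<in> {1..k}"
  shows "- (th t * gam t * real b * lam t * inner (F (xs t) - F (xs (t - 1))) (actual_step t))
    \<le> (step_energy t + step_energy (t - 1)) / 8"
proof -
  let ?dF = "F (xs t) - F (xs (t - 1))"
  have X: "xs t \<in> prod_set blk b Xi" "xs (t - 1) \<in> prod_set blk b Xi" using xs_in t by auto
  have prev: "xs t - xs (t - 1) = actual_step (t - 1)" using t by (simp add: actual_step_def)
  have "inner ?dF (actual_step t) = inner (blk_part blk (ii t) ?dF) (actual_step t)"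
    unfolding actual_step_eq[OF t] by (rule inner_blk_part_right)
  then have "\<bar>inner ?dF (actual_step t)\<bar> \<le> norm (blk_part blk (ii t) ?dF) * norm (actual_step t)"
    by (simp add: Cauchy_Schwarz_ineq2)
  also have "\<dots> \<le> Lbar * norm (actual_step (t - 1)) * norm (actual_step t)"
  proof (rule mult_right_mono)
    show "norm (blk_part blk (ii t) ?dF) \<le> Lbar * norm (actual_step (t - 1))"
      using Fi_lip ii_less t X unfolding prev[symmetric] blk_part_diff by blast
  qed simp
  finally have "- (th t * gam t * real b * lam t * inner ?dF (actual_step t))
      \<le> (real b * th t * (norm (actual_step t))\<^sup>2 + real b * th (t - 1) * (norm (actual_step (t - 1)))\<^sup>2) / 8"
    using th_Lbar t th_nonneg gam_nonneg lam_nonneg by (intro extrapolation_error_young) auto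
  then show ?thesis by (simp add: step_energy_def)
qed

lemma noise_variance_absorbed:
  assumes t: "t \<in> {1..k}"
  shows "th t / 2 * (real b * (norm (actual_step t))\<^sup>2 - (norm (full_step t))\<^sup>2)
      - th t / 2 * (norm (full_step t))\<^sup>2 + (th t)\<^sup>2 / (2 * ghost_weight) * (norm (noise t))\<^sup>2
      - residual_coeff t * (real b * (norm (actual_step t))\<^sup>2 - (norm (full_step t))\<^sup>2)
    \<le> - step_energy t / 4"
proof -
  let ?D = "actual_step t" and ?d = "full_step t"
  define A where "A = (th t)\<^sup>2 / (2 * ghost_weight)"
  have noise_sq: "(norm (noise t))\<^sup>2
      = (real b - 2) * (real b * (norm ?D)\<^sup>2 - (norm ?d)\<^sup>2) + (real b - 1) * (norm ?d)\<^sup>2"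
    unfolding noise_def actual_step_eq[OF t] by (rule norm_scaled_blk_part_minus_sq)
  have coeff: "residual_coeff t = 3 * th t / 4 + A * (real b - 2)"
    by (simp add: residual_coeff_def A_def)
  have "th t / 2 * (real b * (norm ?D)\<^sup>2 - (norm ?d)\<^sup>2) - th t / 2 * (norm ?d)\<^sup>2
      + A * (norm (noise t))\<^sup>2 - residual_coeff t * (real b * (norm ?D)\<^sup>2 - (norm ?d)\<^sup>2)
    = - step_energy t / 4 + (A * (real b - 1) - th t / 4) * (norm ?d)\<^sup>2"
    unfolding noise_sq coeff by (simp add: step_energy_def algebra_simps)
  moreover have "A * (real b - 1) \<le> th t / 4"
  proof -
    have "A * (real b - 1) = (th t)\<^sup>2 * (real b - 1) / (2 * ghost_weight)" by (simp add: A_def)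
    then show ?thesis using noise_variance_le[OF t] th_nonneg[rule_format, of t] by linarith
  qed
  then have "(A * (real b - 1) - th t / 4) * (norm ?d)\<^sup>2 \<le> 0"
    by (simp add: mult_nonpos_nonneg)
  ultimately show ?thesis unfolding A_def by linarith
qed

context
  fixes u assumes u: "u \<in> prod_set blk b Xi"
begin

definition "gap_term t = th t * gam t *
   (real b * inner (F (xs (t + 1))) (xs (t + 1) - u) - (real b - 1) * inner (F (xs t)) (xs t - u))"
definition "extrap_term t = th t * gam t * real b * inner (F (xs (t + 1)) - F (xs t)) (xs (t + 1) - u)"

lemma extrap_term_0: "extrap_term 0 = 0"
  using xs_0 by (simp add: extrap_term_def)

lemma gap_term_split:
  assumes t: "t \<in> {1..k}"
  shows "gap_term t = th t * gam t * (real b * inner (ext_op t) (xs (t + 1) - u)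
        - (real b - 1) * inner (ext_op t) (xs t - u))
      + (extrap_term t - extrap_term (t - 1))
      - th t * gam t * real b * lam t * inner (F (xs t) - F (xs (t - 1))) (actual_step t)"
proof -
  have "th t * gam t * lam t * inner (F (xs t) - F (xs (t - 1))) (xs t - u) = extrap_term (t - 1)"
  proof (cases "t = 1")
    case True
    then show ?thesis using xs_0 by (simp add: extrap_term_def)
  next
    case False
    then have "t - 1 \<in> {1..k}" "t - 1 + 1 = t" using t by auto
    then have "th t * gam t * lam t = th (t - 1) * gam (t - 1) * real b" using th_eq by metis
    then show ?thesis using \<open>t - 1 + 1 = t\<close> by (simp add: extrap_term_def)
  qed
  then show ?thesis
    unfolding gap_term_def extrap_term_def ext_op_def actual_step_def by (simp add: inner_simps algebra_simps)
qed

lemma noise_term_eq: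
  assumes t: "t \<in> {1..k}"
  shows "th t * inner (noise t) (xs t - u) = th t * inner (noise t) (xs t - ghost t)
      + ghost_weight * (Vd (ghost t) u - Vd (ghost (t + 1)) u)
      + (th t)\<^sup>2 / (2 * ghost_weight) * (norm (noise t))\<^sup>2"
proof -
  have "th t * inner (noise t) (xs t - u)
      = th t * inner (noise t) (xs t - ghost t) + th t * inner (noise t) (ghost t - u)"
    by (simp add: inner_simps algebra_simps)
  also have "th t * inner (noise t) (ghost t - u) = ghost_weight * (Vd (ghost t) u - Vd (ghost (t + 1)) u)
      + (th t)\<^sup>2 / (2 * ghost_weight) * (norm (noise t))\<^sup>2"
    using inner_as_Vd_decrease[OF ghost_weight_pos] ghost_Suc t by simp
  finally show ?thesis by simp
qed

lemma full_step_prox: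
  assumes t: "t \<in> {1..k}"
  shows "gam t * inner (ext_op t) (xs t + full_step t - u)
    \<le> Vd (xs t) u - Vd (xs t + full_step t) u - (norm (full_step t))\<^sup>2 / 2"
proof -
  have "hh t = xs t + full_step t" "Vd (xs t) (hh t) = (norm (full_step t))\<^sup>2 / 2"
    by (simp_all add: Vd_def full_step_def norm_minus_commute)
  then show ?thesis using hh_prox t u by force
qed

lemma gap_term_le:
  assumes t: "t \<in> {1..k}"
  shows "gap_term t \<le> th t * real b * (Vd (xs t) u - Vd (xs (t + 1)) u)
      + ghost_weight * (Vd (ghost t) u - Vd (ghost (t + 1)) u)
      + (extrap_term t - extrap_term (t - 1))
      + (step_energy (t - 1) - step_energy t) / 8
      + (real b * residual_part t (ii t) - (\<Sum>i<b. residual_part t i))"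
proof -
  let ?x = "xs t" and ?D = "actual_step t" and ?d = "full_step t" and ?g = "ext_op t"
  have next_eq: "?x + ?D = xs (t + 1)" by (simp add: actual_step_def)
  have resampled: "th t * gam t * (real b * inner ?g (xs (t + 1) - u) - (real b - 1) * inner ?g (?x - u))
     \<le> th t * real b * (Vd ?x u - Vd (xs (t + 1)) u) + th t * inner (noise t) (?x - u)
       + th t * gam t * (real b * inner ?g ?D - inner ?g ?d)
       + th t / 2 * (real b * (norm ?D)\<^sup>2 - (norm ?d)\<^sup>2) - th t / 2 * (norm ?d)\<^sup>2"
    using resampled_prox_inequality[OF _ full_step_prox[OF t], of "th t" "real b" ?D] th_nonneg
    unfolding next_eq noise_def by simp
  show ?thesis
    using gap_term_split[OF t] resampled noise_term_eq[OF t] extrapolation_error[OF t]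
      residual_part_resampled[OF t] noise_variance_absorbed[OF t]
    by argo
qed

lemma last_extrap_term_le: "extrap_term k \<le> th k * real b * Vd (xs (k + 1)) u + step_energy k / 8"
proof -
  have X: "xs (k + 1) \<in> prod_set blk b Xi" "xs k \<in> prod_set blk b Xi" using xs_in by auto
  have "\<bar>inner (F (xs (k + 1)) - F (xs k)) (xs (k + 1) - u)\<bar>
      \<le> norm (F (xs (k + 1)) - F (xs k)) * norm (xs (k + 1) - u)"
    by (rule Cauchy_Schwarz_ineq2)
  also have "\<dots> \<le> L * norm (actual_step k) * norm (xs (k + 1) - u)"
    using F_lip X by (intro mult_right_mono) (auto simp: actual_step_def)
  finally have "extrap_term k \<le> th k * real b * ((norm (xs (k + 1) - u))\<^sup>2 / 2 + (norm (actual_step k))\<^sup>2 / 8)"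
    unfolding extrap_term_def using L_gam_k th_nonneg gam_nonneg by (intro last_step_error_young) auto
  then show ?thesis by (simp add: step_energy_def Vd_def algebra_simps)
qed

lemma sum_gap_terms_le: "(\<Sum>t=1..k. gap_term t) \<le> 5 * th 1 * real b * Vd (xs 1) u + residual"
proof -
  define V where "V t = real b * Vd (xs t) u" for t
  define G where "G t = ghost_weight * Vd (ghost t) u" for t
  define Y where "Y t = - step_energy t / 8" for t
  have "(\<Sum>t=1..k. gap_term t) \<le> (\<Sum>t=1..k. th t * (V t - V (t + 1)) + (G t - G (t + 1))
      + (extrap_term t - extrap_term (t - 1)) + (Y t - Y (t - 1))
      + (real b * residual_part t (ii t) - (\<Sum>i<b. residual_part t i)))"
  proof (rule sum_mono)
    fix t assume t: "t \<in> {1..k}"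
    have "th t * (V t - V (t + 1)) = th t * real b * (Vd (xs t) u - Vd (xs (t + 1)) u)"
      "G t - G (t + 1) = ghost_weight * (Vd (ghost t) u - Vd (ghost (t + 1)) u)"
      "Y t - Y (t - 1) = (step_energy (t - 1) - step_energy t) / 8"
      by (simp_all add: V_def G_def Y_def algebra_simps diff_divide_distrib)
    with gap_term_le[OF t] show "gap_term t \<le> th t * (V t - V (t + 1)) + (G t - G (t + 1))
      + (extrap_term t - extrap_term (t - 1)) + (Y t - Y (t - 1))
      + (real b * residual_part t (ii t) - (\<Sum>i<b. residual_part t i))"
      by linarith
  qed
  also have "\<dots> = (\<Sum>t=1..k. th t * (V t - V (t + 1))) + (\<Sum>t=1..k. G t - G (t + 1))
      + (\<Sum>t=1..k. extrap_term t - extrap_term (t - 1)) + (\<Sum>t=1..k. Y t - Y (t - 1)) + residual"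
    by (simp only: sum.distrib residual_def)
  also have "\<dots> = (\<Sum>t=1..k. th t * (V t - V (t + 1))) + (G 1 - G (k + 1))
      + (extrap_term k - extrap_term 0) + (Y k - Y 0) + residual"
    by (simp only: sum_telescope_forward sum_telescope_backward)
  also have "\<dots> \<le> (th 1 * V 1 - th k * V (k + 1)) + G 1 + th k * V (k + 1) + residual"
  proof -
    have "(\<Sum>t=1..k. th t * (V t - V (t + 1))) \<le> th 1 * V 1 - th k * V (k + 1)"
      by (rule sum_telescope_decreasing_weights[OF k_pos th_dec]) (simp add: V_def Vd_def)
    moreover have "extrap_term k \<le> th k * V (k + 1) - Y k"
      using last_extrap_term_le by (simp add: V_def Y_def)
    moreover have "G (k + 1) \<ge> 0" using ghost_weight_pos by (simp add: G_def Vd_def)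
    moreover have "Y 0 = 0" by (simp add: Y_def step_energy_0)
    ultimately show ?thesis using extrap_term_0 by linarith
  qed
  also have "\<dots> = 5 * th 1 * real b * Vd (xs 1) u + residual"
    unfolding V_def G_def ghost_1 ghost_weight_def by (simp add: algebra_simps)
  finally show ?thesis .
qed

lemma weighted_gap_le:
  "(\<Sum>t=1..k-1. (th t * gam t * real b - th (t + 1) * gam (t + 1) * (real b - 1))
       * inner (F u) (xs (t + 1) - u))
     + (th k * gam k * real b) * inner (F u) (xs (k + 1) - u)
   \<le> th 1 * (gam 1 * (real b - 1) * inner (F (xs 1)) (xs 1 - u) + 5 * real b * Vd (xs 1) u) + residual"
proof -
  define a where "a t = th t * gam t * real b * inner (F (xs (t + 1))) (xs (t + 1) - u)" for t
  define c where "c t = th t * gam t * (real b - 1) * inner (F (xs t)) (xs t - u)" for t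
  have mono: "inner (F u) (xs t - u) \<le> inner (F (xs t)) (xs t - u)" if "t \<le> k + 1" for t
    using F_mono xs_in u that by (simp add: inner_diff_left)
  have "(\<Sum>t=1..k-1. (th t * gam t * real b - th (t + 1) * gam (t + 1) * (real b - 1))
       * inner (F u) (xs (t + 1) - u)) \<le> (\<Sum>t=1..k-1. a t - c (t + 1))"
  proof (rule sum_mono)
    fix t assume t: "t \<in> {1..k-1}"
    have "th t * gam t * real b - th (t + 1) * gam (t + 1) * (real b - 1) \<ge> 0"
      using th_ge[rule_format, of "t + 1"] t by auto
    then have "(th t * gam t * real b - th (t + 1) * gam (t + 1) * (real b - 1))
       * inner (F u) (xs (t + 1) - u) \<le> (th t * gam t * real b - th (t + 1) * gam (t + 1) * (real b - 1))
       * inner (F (xs (t + 1))) (xs (t + 1) - u)"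
      using mono[of "t + 1"] t by (intro mult_left_mono) auto
    then show "(th t * gam t * real b - th (t + 1) * gam (t + 1) * (real b - 1))
       * inner (F u) (xs (t + 1) - u) \<le> a t - c (t + 1)"
      by (simp add: a_def c_def algebra_simps)
  qed
  moreover have "(th k * gam k * real b) * inner (F u) (xs (k + 1) - u) \<le> a k"
    unfolding a_def using mono[of "k + 1"] th_nonneg gam_nonneg by (intro mult_left_mono) auto
  moreover have "(\<Sum>t=1..k-1. a t - c (t + 1)) + a k = c 1 + (\<Sum>t=1..k. gap_term t)"
    using sum_shift_pairs[OF k_pos, of a c] by (simp add: a_def c_def gap_term_def algebra_simps)
  ultimately show ?thesis
    using sum_gap_terms_le by (simp add: c_def algebra_simps)
qed

end

end

section \<open>The randomized iteration\<close>

locale sboe =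
  fixes blk :: "'n::finite \<Rightarrow> nat" and b k :: nat
    and Xi :: "nat \<Rightarrow> (real^'n) set"
    and F :: "real^'n \<Rightarrow> real^'n" and Lbar :: real
    and gam lam :: "nat \<Rightarrow> real" and x0 :: "real^'n"
    and x :: "(nat \<Rightarrow> nat) \<Rightarrow> nat \<Rightarrow> real^'n"
  assumes b_pos: "b \<ge> 1"
    and blk_range: "\<forall>j. blk j < b"
    and Xi_convex: "\<forall>i<b. convex (Xi i)"
    and X_bounded: "bounded (prod_set blk b Xi)"
    and Fi_lip: "\<forall>i<b. \<forall>y1\<in>prod_set blk b Xi. \<forall>y2\<in>prod_set blk b Xi.
                  norm (blk_part blk i (F y1) - blk_part blk i (F y2)) \<le> Lbar * norm (y1 - y2)"
    and F_mono: "\<forall>y1\<in>prod_set blk b Xi. \<forall>y2\<in>prod_set blk b Xi.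
                  inner (F y1 - F y2) (y1 - y2) \<ge> 0"
    and gam_nonneg: "\<forall>t. gam t \<ge> 0"
    and lam_nonneg: "\<forall>t. lam t \<ge> 0"
    and k_pos: "k \<ge> 1"
    and x0_in: "x0 \<in> prod_set blk b Xi"
    and x_init: "\<forall>w\<in>idx_seqs b k. x w 0 = x0 \<and> x w 1 = x0"
    and x_step: "\<forall>w\<in>idx_seqs b k. \<forall>t\<in>{1..k}.
                  sboe_step blk Xi F (gam t) (lam t) (w t) (x w (t - 1)) (x w t) (x w (t + 1))"
begin

abbreviation "X \<equiv> prod_set blk b Xi"

lemma iterate_fun_upd:
  assumes w: "w \<in> idx_seqs b k" and t: "t \<in> {1..k}" and j: "j < b"
  shows "s \<le> t \<Longrightarrow> x (w(t := j)) s = x w s"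
proof (induction s rule: less_induct)
  case (less s)
  have w': "w(t := j) \<in> idx_seqs b k" using idx_seqs_fun_upd w t j by blast
  show ?case
  proof (cases "s \<le> 1")
    case True
    then have "s = 0 \<or> s = 1" by auto
    then show ?thesis using x_init w w' by metis
  next
    case False
    then obtain r where s: "s = r + 1" and r: "r \<in> {1..k}" "r \<noteq> t"
      using less.prems t by (cases s) auto
    have "r - 1 < s" "r - 1 \<le> t" "r < s" "r \<le> t" using less.prems s by auto
    then have "x (w(t := j)) (r - 1) = x w (r - 1)" "x (w(t := j)) r = x w r"
      using less.IH by blast+
    then have "sboe_step blk Xi F (gam r) (lam r) (w r) (x w (r - 1)) (x w r) (x (w(t := j)) (r + 1))"
      using x_step w' r by fastforce
    moreover have "sboe_step blk Xi F (gam r) (lam r) (w r) (x w (r - 1)) (x w r) (x w (r + 1))"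
      using x_step w r by blast
    moreover have "convex (Xi (w r))" using Xi_convex idx_seqs_less[OF w r(1)] by blast
    ultimately show ?thesis using s sboe_step_unique by metis
  qed
qed

lemma iterate_in_X: "w \<in> idx_seqs b k \<Longrightarrow> t \<le> k + 1 \<Longrightarrow> x w t \<in> X"
proof (induction t)
  case 0
  then show ?case using x_init x0_in by auto
next
  case (Suc t)
  show ?case
  proof (cases "t = 0")
    case True
    then show ?thesis using x_init x0_in Suc.prems by auto
  next
    case False
    then have t: "t \<in> {1..k}" using Suc.prems by auto
    have st: "sboe_step blk Xi F (gam t) (lam t) (w t) (x w (t - 1)) (x w t) (x w (t + 1))"
      using x_step Suc.prems(1) t by blast
    have "blk_part blk i (x w (t + 1)) \<in> Xi i" if "i < b" for i
    proof (cases "i = w t")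
      case True
      then show ?thesis using sboe_step_minimizer(1)[OF st] by simp
    next
      case False
      then have "blk_part blk i (x w (t + 1)) = blk_part blk i (x w t)"
        using st unfolding sboe_step_def by blast
      then show ?thesis using Suc False that by (auto simp: prod_set_def)
    qed
    then show ?thesis by (simp add: prod_set_def)
  qed
qed

definition "full_prox_point w t = (\<Sum>i<b. blk_part blk i (x (w(t := i)) (t + 1)))"

lemma blk_part_full_prox_point:
  "i < b \<Longrightarrow> blk_part blk i (full_prox_point w t) = blk_part blk i (x (w(t := i)) (t + 1))"
  unfolding full_prox_point_def by (rule blk_part_sum_blk_parts)

lemma full_prox_point_fun_upd:
  assumes w: "w \<in> idx_seqs b k" and t: "t \<in> {1..k}" and j: "j < b" and s: "s \<in> {1..t}"
  shows "full_prox_point (w(t := j)) s = full_prox_point w s"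
proof (cases "s = t")
  case False
  have "x (w(t := j, s := i)) (s + 1) = x (w(s := i)) (s + 1)" if "i < b" for i
  proof -
    have "w(s := i) \<in> idx_seqs b k" using idx_seqs_fun_upd[OF w] s t that by auto
    moreover have "w(t := j, s := i) = w(s := i, t := j)" using False by (metis fun_upd_twist)
    ultimately show ?thesis using iterate_fun_upd[OF _ t j] s False by auto
  qed
  then show ?thesis unfolding full_prox_point_def by (intro sum.cong) auto
qed (simp add: full_prox_point_def)

definition "initial_bound y = 5 * (real b + 1) * Vd x0 y + gam 1 * (real b - 1) * inner (F x0) (x0 - y)"

lemma bdd_above_initial_bound: "bdd_above (initial_bound ` X)"
proof -
  obtain M where M: "\<forall>y\<in>X. norm y \<le> M" using X_bounded by (auto simp: bounded_iff)
  have "initial_bound y \<le> 5 * (real b + 1) * ((norm x0 + M)\<^sup>2 / 2)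
      + gam 1 * (real b - 1) * (norm (F x0) * (norm x0 + M))" if y: "y \<in> X" for y
  proof -
    have ny: "norm (x0 - y) \<le> norm x0 + M" using M y norm_triangle_ineq4[of x0 y] by fastforce
    then have "Vd x0 y \<le> (norm x0 + M)\<^sup>2 / 2" unfolding Vd_def by (simp add: power_mono)
    moreover have "inner (F x0) (x0 - y) \<le> norm (F x0) * (norm x0 + M)"
      using norm_cauchy_schwarz[of "F x0" "x0 - y"] ny
      by (meson mult_left_mono norm_ge_zero order_trans)
    ultimately show ?thesis
      unfolding initial_bound_def using gam_nonneg b_pos by (intro add_mono mult_left_mono) auto
  qed
  then show ?thesis by (auto simp: bdd_above_def)
qed

end

lemma S_w_mult_inner_xbar_w:
  assumes S: "S_w b k th gam \<noteq> 0"
  shows "S_w b k th gam * inner c (xbar_w b k th gam xs - u)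
    = (\<Sum>t=1..k-1. (th t * gam t * real b - th (t + 1) * gam (t + 1) * (real b - 1))
         * inner c (xs (t + 1) - u))
      + (th k * gam k * real b) * inner c (xs (k + 1) - u)"
proof -
  define a where "a t = th t * gam t * real b - th (t + 1) * gam (t + 1) * (real b - 1)" for t
  define V where "V = (\<Sum>t=1..k-1. a t *\<^sub>R xs (t + 1)) + (th k * gam k * real b) *\<^sub>R xs (k + 1)"
  have S_eq: "S_w b k th gam = (\<Sum>t=1..k-1. a t) + th k * gam k * real b"
    by (simp add: S_w_def a_def)
  have "xbar_w b k th gam xs = (1 / S_w b k th gam) *\<^sub>R V"
    by (simp add: xbar_w_def V_def a_def)
  then have "S_w b k th gam * inner c (xbar_w b k th gam xs - u) = inner c V - S_w b k th gam * inner c u"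
    using S by (simp add: inner_diff_right algebra_simps)
  also have "\<dots> = (\<Sum>t=1..k-1. a t * inner c (xs (t + 1) - u)) + (th k * gam k * real b) * inner c (xs (k + 1) - u)"
  proof -
    have "inner c V = (\<Sum>t=1..k-1. a t * inner c (xs (t + 1))) + (th k * gam k * real b) * inner c (xs (k + 1))"
      unfolding V_def by (simp add: inner_sum_right inner_add_right)
    moreover have "S_w b k th gam * inner c u = (\<Sum>t=1..k-1. a t * inner c u) + (th k * gam k * real b) * inner c u"
      unfolding S_eq by (simp add: sum_distrib_right distrib_right)
    moreover have "(\<Sum>t=1..k-1. a t * inner c (xs (t + 1) - u))
        = (\<Sum>t=1..k-1. a t * inner c (xs (t + 1))) - (\<Sum>t=1..k-1. a t * inner c u)"
      by (simp add: inner_diff_right right_diff_distrib sum_subtractf)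
    ultimately show ?thesis by (simp add: inner_diff_right right_diff_distrib)
  qed
  finally show ?thesis by (simp add: a_def)
qed

locale sboe_weighted = sboe +
  fixes L :: real and th :: "nat \<Rightarrow> real"
  assumes F_lip: "\<forall>y1\<in>prod_set blk b Xi. \<forall>y2\<in>prod_set blk b Xi.
                  norm (F y1 - F y2) \<le> L * norm (y1 - y2)"
    and th_nonneg: "\<forall>t. th t \<ge> 0"
    and th_eq: "\<forall>t\<in>{1..k}. th (t + 1) * gam (t + 1) * lam (t + 1) = th t * gam t * real b"
    and th_ge: "\<forall>t\<in>{1..k}. th (t - 1) * gam (t - 1) * real b \<ge> th t * gam t * (real b - 1)"
    and th_Lbar: "\<forall>t\<in>{1..k}. th (t - 1) \<ge> 16 * Lbar\<^sup>2 * (gam t)\<^sup>2 * (lam t)\<^sup>2 * th t"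
    and th_dec: "\<forall>t\<in>{1..k}. th t \<le> th (t - 1)"
    and L_gam_k: "4 * L\<^sup>2 * (gam k)\<^sup>2 \<le> 1"
    and S_pos: "S_w b k th gam > 0"
begin

lemma th_1_pos: "th 1 > 0"
proof (rule ccontr)
  assume "\<not> th 1 > 0"
  then have "th t = 0" if "t \<in> {1..k}" for t
    using le_first_if_stepwise_decreasing[OF th_dec] th_nonneg that by (meson atLeastAtMost_iff
        order.antisym not_less order.trans)
  then have "\<forall>t\<in>{1..k-1}. th t * gam t * real b - th (t + 1) * gam (t + 1) * (real b - 1) = 0"
    by auto
  then have "S_w b k th gam = 0" using \<open>\<And>t. t \<in> {1..k} \<Longrightarrow> th t = 0\<close> k_pos by (simp add: S_w_def)
  with S_pos show False by simp
qed

abbreviation "residual_of w \<equiv> sboe_trajectory_data.residual blk b k F gam lam th (x w) (full_prox_point w) w"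

lemma full_prox_point_prox:
  assumes w: "w \<in> idx_seqs b k" and t: "t \<in> {1..k}" and u: "u \<in> X"
  shows "gam t * inner (F (x w t) + lam t *\<^sub>R (F (x w t) - F (x w (t - 1)))) (full_prox_point w t - u)
      \<le> Vd (x w t) u - Vd (full_prox_point w t) u - Vd (x w t) (full_prox_point w t)"
proof (rule blockwise_prox_three_point[OF blk_range Xi_convex _ u], intro allI impI)
  fix i assume i: "i < b"
  have "w(t := i) \<in> idx_seqs b k" using idx_seqs_fun_upd w t i by blast
  then have "sboe_step blk Xi F (gam t) (lam t) i (x (w(t := i)) (t - 1)) (x (w(t := i)) t)
      (x (w(t := i)) (t + 1))"
    using x_step t by fastforce
  moreover have "x (w(t := i)) (t - 1) = x w (t - 1)" "x (w(t := i)) t = x w t"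
    using iterate_fun_upd[OF w t i] by auto
  ultimately have st: "sboe_step blk Xi F (gam t) (lam t) i (x w (t - 1)) (x w t) (x (w(t := i)) (t + 1))"
    by simp
  show "blk_part blk i (full_prox_point w t) \<in> Xi i \<and> (\<forall>v\<in>Xi i.
      gam t * inner (blk_part blk i (F (x w t) + lam t *\<^sub>R (F (x w t) - F (x w (t - 1)))))
        (blk_part blk i (full_prox_point w t)) + Vd (blk_part blk i (x w t)) (blk_part blk i (full_prox_point w t))
      \<le> gam t * inner (blk_part blk i (F (x w t) + lam t *\<^sub>R (F (x w t) - F (x w (t - 1))))) v
        + Vd (blk_part blk i (x w t)) v)"
    using sboe_step_minimizer[OF st] blk_part_full_prox_point[OF i] by simp
qed

lemma sboe_trajectory:
  assumes w: "w \<in> idx_seqs b k"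
  shows "sboe_trajectory blk b k F gam lam th (x w) (full_prox_point w) w Xi L Lbar"
proof unfold_locales
  show "\<forall>t\<le>k + 1. x w t \<in> X" using iterate_in_X w by blast
  show "x w 0 = x w 1" using x_init w by simp
  show "\<forall>t\<in>{1..k}. w t < b" using idx_seqs_less w by blast
  show "\<forall>t\<in>{1..k}. x w (t + 1) = x w t + blk_part blk (w t) (full_prox_point w t - x w t)"
  proof
    fix t assume t: "t \<in> {1..k}"
    have st: "sboe_step blk Xi F (gam t) (lam t) (w t) (x w (t - 1)) (x w t) (x w (t + 1))"
      using x_step w t by blast
    have "blk_part blk (w t) (full_prox_point w t) = blk_part blk (w t) (x w (t + 1))"
      using blk_part_full_prox_point idx_seqs_less[OF w t] by simp
    then show "x w (t + 1) = x w t + blk_part blk (w t) (full_prox_point w t - x w t)"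
      using sboe_step_eq_update[OF st] by (simp add: blk_part_diff)
  qed
qed (use w b_pos blk_range k_pos F_lip Fi_lip F_mono gam_nonneg lam_nonneg th_nonneg th_eq th_ge th_Lbar
      th_dec L_gam_k th_1_pos full_prox_point_prox in \<open>auto simp: sboe_trajectory_data.ext_op_def\<close>)

lemma sum_residual_eq_0: "(\<Sum>w\<in>idx_seqs b k. residual_of w) = 0"
proof -
  let ?part = "\<lambda>w t i. sboe_trajectory_data.residual_part blk b F gam lam th (x w) (full_prox_point w) t i"
  have "(\<Sum>w\<in>idx_seqs b k. residual_of w)
      = (\<Sum>t=1..k. \<Sum>w\<in>idx_seqs b k. real b * ?part w t (w t) - (\<Sum>i<b. ?part w t i))"
    unfolding sboe_trajectory_data.residual_def by (rule sum.swap)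
  also have "\<dots> = 0"
  proof (rule sum.neutral, intro ballI)
    fix t assume t: "t \<in> {1..k}"
    have "?part (w(t := j)) t i = ?part w t i" if "w \<in> idx_seqs b k" "j < b" for w j i
      using iterate_fun_upd[OF that(1) t that(2)] full_prox_point_fun_upd[OF that(1) t that(2)] t
      by (intro residual_part_depends_on_past) auto
    then show "(\<Sum>w\<in>idx_seqs b k. real b * ?part w t (w t) - (\<Sum>i<b. ?part w t i)) = 0"
      by (rule sum_idx_seqs_zero_mean[OF t])
  qed
  finally show ?thesis .
qed

lemma gap_le:
  assumes w: "w \<in> idx_seqs b k"
  shows "gap X F (xbar_w b k th gam (x w))
    \<le> (th 1 * (SUP y\<in>X. initial_bound y) + residual_of w) / S_w b k th gam"
  unfolding gap_def
proof (rule cSUP_least)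
  show "X \<noteq> {}" using x0_in by blast
  fix u assume u: "u \<in> X"
  interpret T: sboe_trajectory blk b k F gam lam th "x w" "full_prox_point w" w Xi L Lbar
    by (rule sboe_trajectory[OF w])
  have x1: "x w 1 = x0" using x_init w by simp
  have "S_w b k th gam * inner (F u) (xbar_w b k th gam (x w) - u)
      \<le> th 1 * (gam 1 * (real b - 1) * inner (F x0) (x0 - u) + 5 * real b * Vd x0 u) + residual_of w"
    using T.weighted_gap_le[OF u] S_pos unfolding S_w_mult_inner_xbar_w[OF less_imp_neq[OF S_pos, symmetric]] x1
    by simp
  also have "th 1 * (gam 1 * (real b - 1) * inner (F x0) (x0 - u) + 5 * real b * Vd x0 u)
      \<le> th 1 * (SUP y\<in>X. initial_bound y)"
  proof -
    have "5 * real b * Vd x0 u \<le> 5 * (real b + 1) * Vd x0 u"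
      by (intro mult_right_mono) (auto simp: Vd_def)
    also have "gam 1 * (real b - 1) * inner (F x0) (x0 - u) + 5 * (real b + 1) * Vd x0 u
        \<le> (SUP y\<in>X. initial_bound y)"
      using bdd_above_initial_bound u by (auto simp: initial_bound_def intro!: cSUP_upper2)
    finally show ?thesis using th_1_pos by (simp add: mult_left_mono)
  qed
  finally show "inner (F u) (xbar_w b k th gam (x w) - u)
      \<le> (th 1 * (SUP y\<in>X. initial_bound y) + residual_of w) / S_w b k th gam"
    using S_pos by (simp add: field_simps)
qed

lemma expected_gap_bound:
  "expect_unif b k (\<lambda>w. gap X F (xbar_w b k th gam (x w)))
    \<le> th 1 / S_w b k th gam * (SUP y\<in>X. initial_bound y)"
proof -
  let ?S = "S_w b k th gam" and ?B = "th 1 * (SUP y\<in>X. initial_bound y)"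
  have "(\<Sum>w\<in>idx_seqs b k. gap X F (xbar_w b k th gam (x w)))
      \<le> (\<Sum>w\<in>idx_seqs b k. (?B + residual_of w) / ?S)"
    by (rule sum_mono) (rule gap_le)
  also have "\<dots> = (real (card (idx_seqs b k)) * ?B + (\<Sum>w\<in>idx_seqs b k. residual_of w)) / ?S"
    by (simp add: sum_divide_distrib[symmetric] sum.distrib)
  also have "\<dots> = real b ^ k * ?B / ?S" by (simp add: sum_residual_eq_0 card_idx_seqs)
  finally show ?thesis using b_pos by (simp add: expect_unif_def field_simps)
qed

end

lemma lipschitz_from_blockwise:
  fixes blk :: "'n::finite \<Rightarrow> nat"
  assumes blk: "\<forall>j. blk j < b" and Lbar: "Lbar > 0"
    and Fi_lip: "\<forall>i<b. \<forall>y1\<in>X. \<forall>y2\<in>X.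
                  norm (blk_part blk i (F y1) - blk_part blk i (F y2)) \<le> Lbar * norm (y1 - y2)"
    and y: "y1 \<in> X" "y2 \<in> X"
  shows "norm (F y1 - F y2) \<le> (sqrt (real b) * Lbar) * norm (y1 - y2)"
proof -
  have "(norm (F y1 - F y2))\<^sup>2 = (\<Sum>i<b. (norm (blk_part blk i (F y1 - F y2)))\<^sup>2)"
    by (rule sum_norm_blk_part_sq[OF blk, symmetric])
  also have "\<dots> \<le> (\<Sum>i<b. (Lbar * norm (y1 - y2))\<^sup>2)"
  proof (rule sum_mono)
    fix i assume "i \<in> {..<b}"
    then have "norm (blk_part blk i (F y1 - F y2)) \<le> Lbar * norm (y1 - y2)"
      using Fi_lip y by (simp add: blk_part_diff)
    then show "(norm (blk_part blk i (F y1 - F y2)))\<^sup>2 \<le> (Lbar * norm (y1 - y2))\<^sup>2"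
      by (rule power_mono) simp
  qed
  also have "\<dots> = (sqrt (real b) * Lbar * norm (y1 - y2))\<^sup>2"
    by (simp add: power_mult_distrib)
  finally show ?thesis
    by (rule power2_le_imp_le) (use Lbar in simp)
qed

context sboe
begin

lemma expected_gap_bound_constant_step:
  assumes Lbar: "Lbar > 0" and gam: "\<forall>t. gam t = 1 / (4 * Lbar * real b)" and lam: "\<forall>t. lam t = real b"
  shows "expect_unif b k (\<lambda>w. gap X F (xbar_w b k (\<lambda>_. 1) gam (x w)))
    \<le> 4 * Lbar * real b / (real k - 1 + real b) * (SUP y\<in>X.
         5 * (real b + 1) * Vd x0 y + (real b - 1) / (4 * Lbar * real b) * inner (F x0) (x0 - y))"
proof -
  have b: "real b > 0" using b_pos by simp
  have g: "gam t = 1 / (4 * Lbar * real b)" and l: "lam t = real b" for t using gam lam by simp_all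
  have S: "S_w b k (\<lambda>_. 1) gam = (real k - 1 + real b) / (4 * Lbar * real b)"
  proof -
    have "S_w b k (\<lambda>_. 1) gam = (\<Sum>t=1..k-1. 1 / (4 * Lbar * real b)) + real b / (4 * Lbar * real b)"
      unfolding S_w_def g by (simp add: algebra_simps diff_divide_distrib)
    also have "\<dots> = (real k - 1 + real b) / (4 * Lbar * real b)"
      using k_pos by (simp add: of_nat_diff add_divide_distrib)
    finally show ?thesis .
  qed
  interpret sboe_weighted blk b k Xi F Lbar gam lam x0 x "sqrt (real b) * Lbar" "\<lambda>_. 1"
  proof unfold_locales
    show "\<forall>y1\<in>X. \<forall>y2\<in>X. norm (F y1 - F y2) \<le> sqrt (real b) * Lbar * norm (y1 - y2)"
      using lipschitz_from_blockwise[OF blk_range Lbar Fi_lip] by blast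
    have "real b * 1 \<le> real b * (4 * real b)" using b b_pos by (intro mult_left_mono) auto
    then show "4 * (sqrt (real b) * Lbar)\<^sup>2 * (gam k)\<^sup>2 \<le> 1"
      unfolding g using Lbar b by (simp add: power_mult_distrib power_divide field_simps power2_eq_square)
    show "\<forall>t\<in>{1..k}. 16 * Lbar\<^sup>2 * (gam t)\<^sup>2 * (lam t)\<^sup>2 * 1 \<le> 1"
      unfolding g l using Lbar b by (simp add: power_mult_distrib power_divide field_simps)
    show "\<forall>t\<in>{1..k}. 1 * gam (t - 1) * real b \<ge> 1 * gam t * (real b - 1)"
      unfolding g using Lbar b by (simp add: field_simps)
    show "S_w b k (\<lambda>_. 1) gam > 0" unfolding S using Lbar b k_pos by (simp add: field_simps)
  qed (use g l in auto)
  show ?thesis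
    using expected_gap_bound by (simp add: S initial_bound_def g)
qed

end

theorem theorem4p2:
  fixes blk :: "'n::finite \<Rightarrow> nat" and b k :: nat
    and Xi :: "nat \<Rightarrow> (real^'n) set"
    and F :: "real^'n \<Rightarrow> real^'n" and L Lbar :: real
    and gam lam :: "nat \<Rightarrow> real" and x0 :: "real^'n"
    and x :: "(nat \<Rightarrow> nat) \<Rightarrow> nat \<Rightarrow> real^'n"
  assumes b_pos: "b \<ge> 1"
    and blk_range: "\<forall>j. blk j < b"
    and blk_nonempty: "\<forall>i<b. \<exists>j. blk j = i"
    and Xi_sub: "\<forall>i<b. Xi i \<subseteq> blk_space blk i"
    and Xi_ne: "\<forall>i<b. Xi i \<noteq> {}"
    and Xi_closed: "\<forall>i<b. closed (Xi i)"
    and Xi_convex: "\<forall>i<b. convex (Xi i)"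
    and X_bounded: "bounded (prod_set blk b Xi)"
    and F_lip: "\<forall>y1\<in>prod_set blk b Xi. \<forall>y2\<in>prod_set blk b Xi.
                  norm (F y1 - F y2) \<le> L * norm (y1 - y2)"
    and Fi_lip: "\<forall>i<b. \<forall>y1\<in>prod_set blk b Xi. \<forall>y2\<in>prod_set blk b Xi.
                  norm (blk_part blk i (F y1) - blk_part blk i (F y2)) \<le> Lbar * norm (y1 - y2)"
    and F_mono: "\<forall>y1\<in>prod_set blk b Xi. \<forall>y2\<in>prod_set blk b Xi.
                  inner (F y1 - F y2) (y1 - y2) \<ge> 0"
    and gam_nonneg: "\<forall>t. gam t \<ge> 0"
    and lam_nonneg: "\<forall>t. lam t \<ge> 0"
    and k_pos: "k \<ge> 1"
    and x0_in: "x0 \<in> prod_set blk b Xi"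
    and x_init: "\<forall>\<omega>\<in>idx_seqs b k. x \<omega> 0 = x0 \<and> x \<omega> 1 = x0"
    and x_step: "\<forall>\<omega>\<in>idx_seqs b k. \<forall>t\<in>{1..k}.
                  sboe_step blk Xi F (gam t) (lam t) (\<omega> t) (x \<omega> (t - 1)) (x \<omega> t) (x \<omega> (t + 1))"
  shows
   "(\<forall>th :: nat \<Rightarrow> real.
       (\<forall>t. th t \<ge> 0) \<and>
       (\<forall>t\<in>{1..k}. th (t + 1) * gam (t + 1) * lam (t + 1) = th t * gam t * real b) \<and>
       (\<forall>t\<in>{1..k}. th (t - 1) * gam (t - 1) * real b \<ge> th t * gam t * (real b - 1)) \<and>
       (\<forall>t\<in>{1..k}. th (t - 1) \<ge> 16 * Lbar\<^sup>2 * (gam t)\<^sup>2 * (lam t)\<^sup>2 * th t) \<and>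
       (\<forall>t\<in>{1..k}. th t \<le> th (t - 1)) \<and>
       4 * L\<^sup>2 * (gam k)\<^sup>2 \<le> 1 \<and>
       S_w b k th gam > 0
     \<longrightarrow>
       expect_unif b k (\<lambda>\<omega>. gap (prod_set blk b Xi) F (xbar_w b k th gam (x \<omega>)))
         \<le> th 1 / S_w b k th gam * (SUP y\<in>prod_set blk b Xi.
               5 * (real b + 1) * Vd x0 y + gam 1 * (real b - 1) * inner (F x0) (x0 - y)))
    \<and>
    ((Lbar > 0 \<and> (\<forall>t. gam t = 1 / (4 * Lbar * real b)) \<and> (\<forall>t. lam t = real b))
     \<longrightarrow>
       expect_unif b k (\<lambda>\<omega>. gap (prod_set blk b Xi) F (xbar_w b k (\<lambda>_. 1) gam (x \<omega>)))
       \<le> 4 * Lbar * real b / (real k - 1 + real b) * (SUP y\<in>prod_set blk b Xi.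
             5 * (real b + 1) * Vd x0 y
             + (real b - 1) / (4 * Lbar * real b) * inner (F x0) (x0 - y)))"
proof -
  interpret sboe blk b k Xi F Lbar gam lam x0 x
    using b_pos blk_range Xi_convex X_bounded Fi_lip F_mono gam_nonneg lam_nonneg k_pos x0_in
      x_init x_step
    by unfold_locales
  show ?thesis
  proof (intro conjI allI impI, goal_cases)
    case (1 th)
    then interpret sboe_weighted blk b k Xi F Lbar gam lam x0 x L th
      using F_lip by unfold_locales auto
    show ?case using expected_gap_bound by (simp add: initial_bound_def)
  next
    case 2
    then show ?case using expected_gap_bound_constant_step by blast
  qed
qed

end
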